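(* For all real $a$ and $y$, $$\int_0^{\infty}e^{-t}\,\operatorname{bei}\!\left(a\sqrt{(1+y^2)t}\right)J_0(yt)\,dt=(1+y^2)^{-1/2}I_0\!\left(\frac{a^2y}{4}\right)\sin\!\left(\frac{a^2}{4}\right).$$
   Context: $J_0$, $I_0$ are the Bessel and modified Bessel functions of order $0$. The Kelvin function $\operatorname{bei}$ is $\operatorname{bei}(x)=\sum_{k\ge0}\frac{(-1)^k (x/2)^{4k+2}}{((2k+1)!)^2}$. *)

theory Defs
  imports "HOL-Analysis.Analysis"
begin

definition bessel_J0 :: "real \<Rightarrow> real" where
  "bessel_J0 x = (\<Sum>k. (-1) ^ k * (x / 2) ^ (2 * k) / (fact k) ^ 2)"

definition bessel_I0 :: "real \<Rightarrow> real" where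
  "bessel_I0 x = (\<Sum>k. (x / 2) ^ (2 * k) / (fact k) ^ 2)"

definition kelvin_bei :: "real \<Rightarrow> real" where
  "kelvin_bei x = (\<Sum>k. (-1) ^ k * (x / 2) ^ (4 * k + 2) / (fact (2 * k + 1)) ^ 2)"

end

theory Submission
  imports Defs
begin

text \<open>
  Write c = a^2/4, s = 1 + y^2 and M_k(y) = \<integral>_0^\<infinity> e^(-t) t^k J0(y t) dt.  Inserting the power
  series of bei and integrating term by term (each term is dominated by e^(-t/2) times a term
  of the sinh series) turns the integral into \<Sum>_m (-1)^m (c s)^(2m+1) M_(2m+1)(y) / ((2m+1)!)^2.

  Integration by parts, together with Bessel's equation (x J0')' = -x J0, gives the three-term
  recurrence s M_(k+2) = (2k+3) M_(k+1) - (k+1)^2 M_k, and differentiating under the integral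
  sign gives M_0' = -y M_0 / s, whence M_0 = s^(-1/2).  Solving the recurrence,
  M_k = (k!)^2 s^(-k-1/2) P_k(y^2/4) with P_k(w) = \<Sum>_j (-w)^j / ((k-2j)! (j!)^2).

  The integral is therefore s^(-1/2) \<Sum>_m (-1)^m c^(2m+1) P_(2m+1)(y^2/4), which is the Cauchy
  product of the sine series of c with \<Sum>_j (c^2 y^2/4)^j / (j!)^2 = I0(a^2 y/4).
\<close>

lemma summable_abs_power_div_fact_sq: "summable (\<lambda>n. \<bar>x\<bar> ^ n / (fact n)\<^sup>2 :: real)"
proof (rule summable_comparison_test[OF _ summable_exp[of "\<bar>x\<bar>"]])
  have "\<bar>x\<bar> ^ n / (fact n)\<^sup>2 \<le> \<bar>x\<bar> ^ n / fact n" for n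
    by (intro divide_left_mono) (auto simp: power2_eq_square)
  then show "\<exists>N. \<forall>n\<ge>N. norm (\<bar>x\<bar> ^ n / (fact n)\<^sup>2) \<le> inverse (fact n) * \<bar>x\<bar> ^ n"
    by (simp add: field_simps)
qed

lemma sinh_paired: "(\<lambda>m. x ^ (2 * m + 1) / fact (2 * m + 1)) sums sinh (x :: real)"
proof -
  have "(\<lambda>m. (\<lambda>n. if even n then 0 else x ^ n /\<^sub>R fact n) (2 * m + 1)) sums sinh x"
    by (subst sums_mono_reindex) (auto simp: strict_mono_def sinh_converges elim!: oddE)
  then show ?thesis by (simp add: divide_inverse mult.commute)
qed

lemma power_div_fact_le_exp:
  fixes x :: real
  assumes "x \<ge> 0"
  shows "x ^ k / fact k \<le> exp x"
proof -
  have "(\<lambda>n. x ^ n / fact n) sums exp x"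
    using exp_converges[of x] by (simp add: divide_inverse mult.commute)
  then show ?thesis
    using sum_le_suminf[of "\<lambda>n. x ^ n / fact n" "{k}"] assms by (simp add: sums_iff)
qed

lemma power_div_fact_sq_le_exp:
  fixes C t :: real
  assumes "C \<ge> 0" "t \<ge> 0"
  shows "(C * t) ^ k / (fact k)\<^sup>2 \<le> exp (t / 2) * ((2 * C) ^ k / fact k)"
proof -
  have "(C * t) ^ k / (fact k)\<^sup>2 = (2 * C) ^ k / fact k * ((t / 2) ^ k / fact k)"
    by (simp add: power_mult_distrib power_divide power2_eq_square field_simps)
  also have "\<dots> \<le> (2 * C) ^ k / fact k * exp (t / 2)"
    using assms by (intro mult_left_mono power_div_fact_le_exp) auto
  finally show ?thesis
    by (simp add: mult.commute)
qed

lemma second_order_Taylor_bound: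
  fixes f f' f'' :: "real \<Rightarrow> real"
  assumes "\<And>x. (f has_real_derivative f' x) (at x)" "\<And>x. (f' has_real_derivative f'' x) (at x)"
    and "\<And>x. \<bar>f'' x\<bar> \<le> M"
  shows "\<bar>f x - f c - (x - c) * f' c\<bar> \<le> M / 2 * (x - c)\<^sup>2"
proof (cases "x = c")
  case False
  define diff where "diff m = (if m = 0 then f else if m = 1 then f' else f'')" for m :: nat
  obtain t where "f x = (\<Sum>m<2. diff m c / fact m * (x - c) ^ m) + diff 2 t / fact 2 * (x - c)\<^sup>2"
    using Taylor[of 2 diff f "min x c" "max x c" c x] False assms(1,2)
    by (force simp: diff_def less_2_cases_iff)
  then have "\<bar>f x - f c - (x - c) * f' c\<bar> = \<bar>f'' t / 2 * (x - c)\<^sup>2\<bar>"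
    by (simp add: diff_def numeral_2_eq_2)
  also have "\<dots> \<le> M / 2 * (x - c)\<^sup>2"
    using assms(3)[of t] by (simp add: abs_mult mult_right_mono)
  finally show ?thesis .
qed simp

lemma DERIV_of_quadratic_remainder_bound:
  fixes f :: "real \<Rightarrow> real"
  assumes "\<And>z. \<bar>f z - f y - (z - y) * L\<bar> \<le> C * (z - y)\<^sup>2"
  shows "(f has_real_derivative L) (at y)"
proof -
  have close: "\<forall>\<^sub>F z in at y. norm ((f z - f y) / (z - y) - L) \<le> C * \<bar>z - y\<bar>"
  proof (rule eventually_at_filter[THEN iffD2, OF always_eventually], intro allI impI)
    fix z assume "z \<noteq> y"
    have "((f z - f y) / (z - y) - L) * (z - y) = f z - f y - (z - y) * L"
      using \<open>z \<noteq> y\<close> by (simp add: field_simps)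
    then have "\<bar>(f z - f y) / (z - y) - L\<bar> * \<bar>z - y\<bar> = \<bar>f z - f y - (z - y) * L\<bar>"
      by (metis abs_mult)
    also have "\<dots> \<le> (C * \<bar>z - y\<bar>) * \<bar>z - y\<bar>"
      using assms[of z] by (simp add: power2_eq_square)
    finally show "norm ((f z - f y) / (z - y) - L) \<le> C * \<bar>z - y\<bar>"
      using \<open>z \<noteq> y\<close> by (simp add: mult_le_cancel_right)
  qed
  have "((\<lambda>z. C * \<bar>z - y\<bar>) \<longlongrightarrow> C * \<bar>y - y\<bar>) (at y)"
    by (intro tendsto_intros)
  then have "((\<lambda>z. C * \<bar>z - y\<bar>) \<longlongrightarrow> 0) (at y)"
    by simp
  with close have "((\<lambda>z. (f z - f y) / (z - y) - L) \<longlongrightarrow> 0) (at y)"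
    by (rule Lim_null_comparison)
  then show ?thesis
    unfolding has_field_derivative_iff by (rule LIM_zero_cancel)
qed

lemma has_integral_FTC_at_top:
  fixes F f :: "real \<Rightarrow> real"
  assumes deriv: "\<And>x. x \<ge> a \<Longrightarrow> (F has_real_derivative f x) (at x)"
    and int: "f absolutely_integrable_on {a..}"
    and lim: "(F \<longlongrightarrow> L) at_top"
  shows "(f has_integral L - F a) {a..}"
proof -
  have "((\<lambda>b. set_lebesgue_integral lebesgue {a..b} f) \<longlongrightarrow> integral {a..} f) at_top"
    using tendsto_set_lebesgue_integral_at_top[where M = lebesgue and f = f and a = a] int
    by (simp add: set_lebesgue_integral_eq_integral(2))
  moreover have "\<forall>\<^sub>F b in at_top. set_lebesgue_integral lebesgue {a..b} f = F b - F a"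
  proof (rule eventually_at_top_linorderI[of a])
    fix b assume "b \<ge> a"
    have "(f has_integral F b - F a) {a..b}"
      using \<open>b \<ge> a\<close> deriv
      by (intro fundamental_theorem_of_calculus)
         (auto simp: has_real_derivative_iff_has_vector_derivative[symmetric] intro: has_field_derivative_at_within)
    moreover have "f absolutely_integrable_on {a..b}"
      by (rule absolutely_integrable_on_subinterval[OF int]) auto
    ultimately show "set_lebesgue_integral lebesgue {a..b} f = F b - F a"
      by (simp add: set_lebesgue_integral_eq_integral(2) integral_unique)
  qed
  ultimately have "((\<lambda>b. F b - F a) \<longlongrightarrow> integral {a..} f) at_top"
    by (rule Lim_transform_eventually)
  moreover have "((\<lambda>b. F b - F a) \<longlongrightarrow> L - F a) at_top"
    by (intro tendsto_intros lim)
  ultimately have "integral {a..} f = L - F a"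
    by (rule tendsto_unique[rotated]) simp
  with set_lebesgue_integral_eq_integral(1)[OF int] show ?thesis
    by (metis has_integral_integral)
qed

lemma has_integral_suminf_dominated:
  fixes f :: "nat \<Rightarrow> real \<Rightarrow> real"
  assumes int: "\<And>m. (f m has_integral I m) S"
    and g: "g integrable_on S" "\<And>t. t \<in> S \<Longrightarrow> 0 \<le> g t"
    and b: "summable b" "\<And>m. 0 \<le> b m"
    and bound: "\<And>m t. t \<in> S \<Longrightarrow> \<bar>f m t\<bar> \<le> g t * b m"
    and sums: "\<And>t. t \<in> S \<Longrightarrow> (\<lambda>m. f m t) sums F t"
  shows "(F has_integral (\<Sum>m. I m)) S"
proof (rule has_integral_dominated_convergence)
  have "\<bar>I m\<bar> \<le> integral S g * b m" for m
  proof -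
    have "norm (integral S (f m)) \<le> integral S (\<lambda>t. g t * b m)"
      using int g bound by (intro integral_norm_bound_integral integrable_on_mult_left) auto
    then show ?thesis
      using integral_unique[OF int] by simp
  qed
  then have "summable I"
    by (intro summable_comparison_test[OF _ summable_mult[OF b(1)]]) auto
  then show "(\<lambda>n. \<Sum>m<n. I m) \<longlonglongrightarrow> (\<Sum>m. I m)"
    by (simp add: summable_LIMSEQ)
  show "((\<lambda>t. \<Sum>m<n. f m t) has_integral (\<Sum>m<n. I m)) S" for n
    by (intro has_integral_sum int) simp
  show "(\<lambda>t. g t * suminf b) integrable_on S"
    using g(1) by (rule integrable_on_mult_left)
  show "\<forall>t\<in>S. norm (\<Sum>m<n. f m t) \<le> g t * suminf b" for n
  proof
    fix t assume "t \<in> S"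
    have "norm (\<Sum>m<n. f m t) \<le> (\<Sum>m<n. g t * b m)"
      using bound[OF \<open>t \<in> S\<close>] by (intro sum_norm_le) simp
    also have "\<dots> \<le> g t * suminf b"
      using b g(2)[OF \<open>t \<in> S\<close>] by (simp add: sum_distrib_left[symmetric] mult_left_mono sum_le_suminf)
    finally show "norm (\<Sum>m<n. f m t) \<le> g t * suminf b" .
  qed
  show "\<forall>t\<in>S. (\<lambda>n. \<Sum>m<n. f m t) \<longlonglongrightarrow> F t"
    using sums by (simp add: sums_def)
qed

section \<open>Integrals against e^(-t) t^k\<close>

lemma has_integral_exp_neg_power: "((\<lambda>t::real. exp (- t) * t ^ k) has_integral fact k) {0..}"
proof -
  have "((\<lambda>t. t powr (real (Suc k) - 1) / exp t) has_integral fact k) {0..}"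
    using Gamma_integral_real[of "real (Suc k)"] Gamma_fact[of k, where 'a = real] by (simp add: add.commute)
  then show ?thesis
  proof (rule has_integral_spike_finite[where S = "{0}", rotated 2])
    fix t :: real assume "t \<in> {0..} - {0}"
    then show "exp (- t) * t ^ k = t powr (real (Suc k) - 1) / exp t"
      by (simp add: powr_realpow exp_minus field_simps)
  qed auto
qed

lemma absolutely_integrable_exp_neg_power_mult:
  fixes \<phi> :: "real \<Rightarrow> real"
  assumes "continuous_on {0..} \<phi>" and "\<And>t. t \<ge> 0 \<Longrightarrow> \<bar>\<phi> t\<bar> \<le> B"
  shows "(\<lambda>t. exp (- t) * t ^ k * \<phi> t) absolutely_integrable_on {0..}"
proof (rule measurable_bounded_by_integrable_imp_absolutely_integrable)
  show "(\<lambda>t. exp (- t) * t ^ k * \<phi> t) \<in> borel_measurable (lebesgue_on {0..})"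
    by (intro continuous_imp_measurable_on_sets_lebesgue continuous_intros assms(1)) auto
  show "(\<lambda>t. B * (exp (- t) * t ^ k)) integrable_on {0..}"
    using has_integral_exp_neg_power by (intro integrable_on_mult_right) blast
  fix t :: real assume "t \<in> {0..}"
  then show "norm (exp (- t) * t ^ k * \<phi> t) \<le> B * (exp (- t) * t ^ k)"
    using assms(2)[of t] by (simp add: abs_mult mult_right_mono mult.commute)
qed auto

lemma tendsto_exp_neg_power_mult_at_top:
  fixes \<phi> :: "real \<Rightarrow> real"
  assumes "\<And>t. t \<ge> 0 \<Longrightarrow> \<bar>\<phi> t\<bar> \<le> B"
  shows "((\<lambda>t. exp (- t) * t ^ k * \<phi> t) \<longlongrightarrow> 0) at_top"
proof (rule Lim_null_comparison)
  show "\<forall>\<^sub>F t in at_top. norm (exp (- t) * t ^ k * \<phi> t) \<le> B * (t ^ k / exp t)"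
    using assms by (intro eventually_at_top_linorderI[of 0])
      (simp add: abs_mult exp_minus field_simps mult_right_mono)
  show "((\<lambda>t. B * (t ^ k / exp t)) \<longlongrightarrow> 0) at_top"
    using tendsto_mult_right_zero[OF tendsto_power_div_exp_0] .
qed

lemma integral_exp_neg_power_Suc_by_parts:
  fixes \<phi> \<phi>' :: "real \<Rightarrow> real"
  assumes deriv: "\<And>t. (\<phi> has_real_derivative \<phi>' t) (at t)"
    and bound: "\<And>t. t \<ge> 0 \<Longrightarrow> \<bar>\<phi> t\<bar> \<le> B"
    and int': "(\<lambda>t. exp (- t) * t ^ Suc k * \<phi>' t) absolutely_integrable_on {0..}"
  shows "integral {0..} (\<lambda>t. exp (- t) * t ^ Suc k * \<phi> t)
       = of_nat (Suc k) * integral {0..} (\<lambda>t. exp (- t) * t ^ k * \<phi> t)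
         + integral {0..} (\<lambda>t. exp (- t) * t ^ Suc k * \<phi>' t)"
proof -
  have "continuous_on {0..} \<phi>"
    using deriv by (intro continuous_at_imp_continuous_on ballI DERIV_isCont) blast
  then have int: "(\<lambda>t. exp (- t) * t ^ j * \<phi> t) absolutely_integrable_on {0..}" for j
    using bound by (rule absolutely_integrable_exp_neg_power_mult)
  let ?f = "\<lambda>t. of_nat (Suc k) * (exp (- t) * t ^ k * \<phi> t) - exp (- t) * t ^ Suc k * \<phi> t
                 + exp (- t) * t ^ Suc k * \<phi>' t"
  have "((\<lambda>t. exp (- t) * t ^ Suc k * \<phi> t) has_real_derivative ?f t) (at t)" for t
    by (rule derivative_eq_intros deriv refl | simp add: algebra_simps)+
  moreover have "?f absolutely_integrable_on {0..}"
    by (intro set_integral_add set_integral_diff set_integrable_mult_right int int')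
  moreover have "((\<lambda>t. exp (- t) * t ^ Suc k * \<phi> t) \<longlongrightarrow> 0) at_top"
    using bound by (rule tendsto_exp_neg_power_mult_at_top)
  ultimately have "(?f has_integral 0 - 0) {0..}"
    using has_integral_FTC_at_top[of 0 "\<lambda>t. exp (- t) * t ^ Suc k * \<phi> t" ?f 0] by simp
  then have "integral {0..} ?f = 0"
    by (simp add: integral_unique)
  moreover have "(\<lambda>t. exp (- t) * t ^ j * \<phi> t) integrable_on {0..}" for j
    using int by (rule set_lebesgue_integral_eq_integral(1))
  moreover have "(\<lambda>t. exp (- t) * t ^ Suc k * \<phi>' t) integrable_on {0..}"
    using int' by (rule set_lebesgue_integral_eq_integral(1))
  ultimately show ?thesis
    by (simp only: integral_add integral_diff integral_mult_right integrable_diff integrable_on_mult_right)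
qed

section \<open>The Bessel function J0\<close>

definition J0_coeff :: "nat \<Rightarrow> real" where
  "J0_coeff n = (-1) ^ n / (fact n)\<^sup>2"

definition J0_series :: "real \<Rightarrow> real" where
  "J0_series u = (\<Sum>n. J0_coeff n * u ^ n)"

definition J0_series' :: "real \<Rightarrow> real" where
  "J0_series' u = (\<Sum>n. diffs J0_coeff n * u ^ n)"

definition J0_series'' :: "real \<Rightarrow> real" where
  "J0_series'' u = (\<Sum>n. diffs (diffs J0_coeff) n * u ^ n)"

lemma summable_J0_series: "summable (\<lambda>n. J0_coeff n * u ^ n)"
proof (rule summable_norm_cancel)
  show "summable (\<lambda>n. norm (J0_coeff n * u ^ n))"
    using summable_abs_power_div_fact_sq[of u] by (simp add: J0_coeff_def abs_mult power_abs)
qed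

lemma summable_J0_series': "summable (\<lambda>n. diffs J0_coeff n * u ^ n)"
  by (intro termdiff_converges_all summable_J0_series)

lemma summable_J0_series'': "summable (\<lambda>n. diffs (diffs J0_coeff) n * u ^ n)"
  by (intro termdiff_converges_all summable_J0_series')

lemma DERIV_J0_series: "(J0_series has_real_derivative J0_series' u) (at u)"
  unfolding J0_series_def[abs_def] J0_series'_def
  by (intro termdiffs_strong_converges_everywhere summable_J0_series)

lemma DERIV_J0_series': "(J0_series' has_real_derivative J0_series'' u) (at u)"
  unfolding J0_series'_def[abs_def] J0_series''_def
  by (intro termdiffs_strong_converges_everywhere summable_J0_series')

lemma J0_coeff_Suc: "(of_nat (Suc n))\<^sup>2 * J0_coeff (Suc n) = - J0_coeff n"
  by (simp add: J0_coeff_def power2_eq_square)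

lemma J0_series_ODE: "J0_series' u + u * J0_series'' u = - J0_series u"
proof -
  define c where "c n = of_nat n * diffs J0_coeff n" for n
  have shift: "diffs (diffs J0_coeff) n = c (Suc n)" for n
    by (simp add: c_def diffs_def)
  have sc: "summable (\<lambda>n. c n * u ^ n)"
    using summable_J0_series''[of u] unfolding shift by (simp add: summable_powser_split_head)
  have "u * J0_series'' u = (\<Sum>n. c n * u ^ n)"
    using powser_split_head(1)[OF sc] by (simp add: J0_series''_def shift c_def mult.commute)
  then have "J0_series' u + u * J0_series'' u = (\<Sum>n. (diffs J0_coeff n + c n) * u ^ n)"
    unfolding J0_series'_def distrib_right by (simp add: suminf_add[OF summable_J0_series' sc])
  also have "\<dots> = (\<Sum>n. - (J0_coeff n * u ^ n))"
    using J0_coeff_Suc by (simp add: c_def diffs_def algebra_simps power2_eq_square)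
  finally show ?thesis
    by (simp add: J0_series_def suminf_minus[OF summable_J0_series])
qed

definition bessel_J0' :: "real \<Rightarrow> real" where
  "bessel_J0' x = x / 2 * J0_series' ((x / 2)\<^sup>2)"

definition bessel_J0'' :: "real \<Rightarrow> real" where
  "bessel_J0'' x = J0_series' ((x / 2)\<^sup>2) / 2 + (x / 2)\<^sup>2 * J0_series'' ((x / 2)\<^sup>2)"

lemma bessel_J0_eq_J0_series: "bessel_J0 x = J0_series ((x / 2)\<^sup>2)"
  unfolding bessel_J0_def J0_series_def J0_coeff_def by (simp add: power_mult)

lemma DERIV_bessel_J0: "(bessel_J0 has_real_derivative bessel_J0' x) (at x)"
proof -
  have "((\<lambda>x. J0_series ((x / 2)\<^sup>2)) has_real_derivative J0_series' ((x / 2)\<^sup>2) * (2 * (x / 2) * (1 / 2))) (at x)"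
    by (rule DERIV_chain2[OF DERIV_J0_series]) (auto intro!: derivative_eq_intros)
  then show ?thesis
    unfolding bessel_J0_eq_J0_series[abs_def] bessel_J0'_def by (simp add: mult.commute)
qed

lemma DERIV_bessel_J0': "(bessel_J0' has_real_derivative bessel_J0'' x) (at x)"
proof -
  have "((\<lambda>x. J0_series' ((x / 2)\<^sup>2)) has_real_derivative J0_series'' ((x / 2)\<^sup>2) * (2 * (x / 2) * (1 / 2))) (at x)"
    by (rule DERIV_chain2[OF DERIV_J0_series']) (auto intro!: derivative_eq_intros)
  from DERIV_mult[OF DERIV_cdivide[OF DERIV_ident, of 2] this]
  show ?thesis
    unfolding bessel_J0'_def[abs_def] bessel_J0''_def by (simp add: power2_eq_square algebra_simps)
qed

lemma bessel_J0_ODE: "bessel_J0' x + x * bessel_J0'' x = - x * bessel_J0 x"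
proof -
  have "bessel_J0' x + x * bessel_J0'' x
      = x * (J0_series' ((x / 2)\<^sup>2) + (x / 2)\<^sup>2 * J0_series'' ((x / 2)\<^sup>2))"
    unfolding bessel_J0'_def bessel_J0''_def by (simp add: algebra_simps)
  then show ?thesis by (simp add: J0_series_ODE bessel_J0_eq_J0_series)
qed

lemma bessel_J0_0 [simp]: "bessel_J0 0 = 1"
  using powser_zero[of J0_coeff] by (simp add: bessel_J0_eq_J0_series J0_series_def J0_coeff_def)

lemma bessel_J0'_0 [simp]: "bessel_J0' 0 = 0"
  by (simp add: bessel_J0'_def)

lemma bessel_J0''_0 [simp]: "bessel_J0'' 0 = -1/2"
  using powser_zero[of "diffs J0_coeff"] by (simp add: bessel_J0''_def J0_series'_def diffs_def J0_coeff_def)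

lemma bessel_J0_minus [simp]: "bessel_J0 (- x) = bessel_J0 x"
  by (simp add: bessel_J0_eq_J0_series power2_eq_square)

lemma bessel_J0'_minus [simp]: "bessel_J0' (- x) = - bessel_J0' x"
  by (simp add: bessel_J0'_def power2_eq_square)

lemma continuous_on_bessel_J0 [continuous_intros]:
  "continuous_on S f \<Longrightarrow> continuous_on S (\<lambda>x. bessel_J0 (f x))"
  by (rule continuous_on_compose2[of UNIV, OF continuous_at_imp_continuous_on])
     (auto intro: DERIV_isCont DERIV_bessel_J0)

lemma continuous_on_bessel_J0' [continuous_intros]:
  "continuous_on S f \<Longrightarrow> continuous_on S (\<lambda>x. bessel_J0' (f x))"
  by (rule continuous_on_compose2[of UNIV, OF continuous_at_imp_continuous_on])
     (auto intro: DERIV_isCont DERIV_bessel_J0')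

lemma bessel_J0_energy_le_1: "(bessel_J0 x)\<^sup>2 + (bessel_J0' x)\<^sup>2 \<le> 1"
proof -
  define E where "E x = (bessel_J0 x)\<^sup>2 + (bessel_J0' x)\<^sup>2" for x
  have "E x \<le> E 0" if "x \<ge> 0" for x
  proof (rule DERIV_nonpos_imp_nonincreasing[OF that])
    fix z :: real assume "0 \<le> z"
    let ?E' = "2 * bessel_J0' z * (bessel_J0 z + bessel_J0'' z)"
    have "(E has_real_derivative ?E') (at z)"
      unfolding E_def[abs_def]
      by (rule derivative_eq_intros DERIV_bessel_J0 DERIV_bessel_J0' refl | simp add: algebra_simps)+
    moreover have "?E' \<le> 0"
    proof (cases "z = 0")
      case True
      then show ?thesis by simp
    next
      case False
      have ODE: "z * bessel_J0 z + z * bessel_J0'' z = - bessel_J0' z"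
        using bessel_J0_ODE[of z] by linarith
      have "z * ?E' = 2 * bessel_J0' z * (z * bessel_J0 z + z * bessel_J0'' z)"
        by (simp add: algebra_simps)
      also have "\<dots> = - 2 * (bessel_J0' z)\<^sup>2"
        unfolding ODE by (simp add: power2_eq_square)
      also have "\<dots> \<le> 0" by simp
      finally have "z * ?E' \<le> 0" .
      moreover have "z > 0" using \<open>0 \<le> z\<close> False by simp
      ultimately show ?thesis by (simp add: mult_le_0_iff)
    qed
    ultimately show "\<exists>y. (E has_real_derivative y) (at z) \<and> y \<le> 0" by blast
  qed
  then have "E \<bar>x\<bar> \<le> 1" by (simp add: E_def)
  \<comment> \<open>\<open>E\<close> is even\<close>
  then show ?thesis by (cases "x \<ge> 0") (simp_all add: E_def)
qed

lemma abs_bessel_J0_le_1: "\<bar>bessel_J0 x\<bar> \<le> 1"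
  using bessel_J0_energy_le_1[of x] zero_le_power2[of "bessel_J0' x"] abs_square_le_1[of "bessel_J0 x"]
  by linarith

lemma abs_bessel_J0'_le_1: "\<bar>bessel_J0' x\<bar> \<le> 1"
  using bessel_J0_energy_le_1[of x] zero_le_power2[of "bessel_J0 x"] abs_square_le_1[of "bessel_J0' x"]
  by linarith

lemma abs_mult_bessel_J0'_le: "\<bar>x * bessel_J0' x\<bar> \<le> x\<^sup>2"
proof -
  have "norm (x * bessel_J0' x - 0 * bessel_J0' 0) \<le> \<bar>x\<bar> * norm (x - 0)"
  proof (rule field_differentiable_bound[OF convex_closed_segment])
    fix z assume z: "z \<in> closed_segment 0 x"
    show "((\<lambda>x. x * bessel_J0' x) has_field_derivative - z * bessel_J0 z) (at z within closed_segment 0 x)"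
      by (rule has_field_derivative_at_within[OF DERIV_cong[OF DERIV_mult[OF DERIV_ident DERIV_bessel_J0']]])
         (use bessel_J0_ODE[of z] in \<open>simp add: mult.commute\<close>)
    have "\<bar>z\<bar> \<le> \<bar>x\<bar>"
      using z by (auto simp: closed_segment_eq_real_ivl split: if_splits)
    moreover have "\<bar>z\<bar> * \<bar>bessel_J0 z\<bar> \<le> \<bar>z\<bar>"
      using abs_bessel_J0_le_1[of z] by (simp add: mult_left_le)
    ultimately show "norm (- z * bessel_J0 z) \<le> \<bar>x\<bar>"
      by (simp add: abs_mult)
  qed auto
  then show ?thesis by (simp add: power2_eq_square)
qed

lemma abs_bessel_J0''_le_2: "\<bar>bessel_J0'' x\<bar> \<le> 2"
proof (cases "x = 0")
  case False
  have "\<bar>x\<bar> * \<bar>bessel_J0' x\<bar> \<le> \<bar>x\<bar> * \<bar>x\<bar>"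
    using abs_mult_bessel_J0'_le[of x] by (simp add: abs_mult power2_eq_square)
  then have "\<bar>bessel_J0' x\<bar> \<le> \<bar>x\<bar>"
    by (rule mult_left_le_imp_le) (use False in simp)
  then have "\<bar>bessel_J0' x / x\<bar> \<le> 1"
    using False by (simp add: abs_divide)
  moreover have "bessel_J0'' x = - bessel_J0 x - bessel_J0' x / x"
    using bessel_J0_ODE[of x] False by (simp add: field_simps)
  ultimately show ?thesis using abs_bessel_J0_le_1[of x] by linarith
qed simp

lemma bessel_J0_Taylor_bound: "\<bar>bessel_J0 x - bessel_J0 c - (x - c) * bessel_J0' c\<bar> \<le> (x - c)\<^sup>2"
  using second_order_Taylor_bound[OF DERIV_bessel_J0 DERIV_bessel_J0' abs_bessel_J0''_le_2] by simp

section \<open>Laplace moments of J0\<close>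

definition J0_moment :: "nat \<Rightarrow> real \<Rightarrow> real" where
  "J0_moment k y = integral {0..} (\<lambda>t. exp (- t) * t ^ k * bessel_J0 (y * t))"

definition J0'_moment :: "nat \<Rightarrow> real \<Rightarrow> real" where
  "J0'_moment k y = integral {0..} (\<lambda>t. exp (- t) * t ^ k * bessel_J0' (y * t))"

lemma absolutely_integrable_J0_moment:
  "(\<lambda>t. exp (- t) * t ^ k * bessel_J0 (y * t)) absolutely_integrable_on {0..}"
  by (rule absolutely_integrable_exp_neg_power_mult[where B = 1])
     (auto intro!: continuous_intros abs_bessel_J0_le_1)

lemma absolutely_integrable_J0'_moment:
  "(\<lambda>t. exp (- t) * t ^ k * bessel_J0' (y * t)) absolutely_integrable_on {0..}"
  by (rule absolutely_integrable_exp_neg_power_mult[where B = 1])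
     (auto intro!: continuous_intros abs_bessel_J0'_le_1)

lemma integrable_J0_moment: "(\<lambda>t. exp (- t) * t ^ k * bessel_J0 (y * t)) integrable_on {0..}"
  using absolutely_integrable_J0_moment by (rule set_lebesgue_integral_eq_integral(1))

lemma integrable_J0'_moment: "(\<lambda>t. exp (- t) * t ^ k * bessel_J0' (y * t)) integrable_on {0..}"
  using absolutely_integrable_J0'_moment by (rule set_lebesgue_integral_eq_integral(1))

lemma DERIV_bessel_J0_scaled:
  "((\<lambda>t. bessel_J0 (y * t)) has_real_derivative y * bessel_J0' (y * t)) (at t)"
  using DERIV_chain2[OF DERIV_bessel_J0 DERIV_cmult[OF DERIV_ident, of y]] by (simp add: mult.commute)

lemma DERIV_bessel_J0'_scaled:
  "((\<lambda>t. bessel_J0' (y * t)) has_real_derivative y * bessel_J0'' (y * t)) (at t)"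
  using DERIV_chain2[OF DERIV_bessel_J0' DERIV_cmult[OF DERIV_ident, of y]] by (simp add: mult.commute)

lemma J0_moment_Suc:
  "J0_moment (Suc k) y = of_nat (Suc k) * J0_moment k y + y * J0'_moment (Suc k) y"
proof -
  have "(\<lambda>t. exp (- t) * t ^ Suc k * (y * bessel_J0' (y * t))) = (\<lambda>t. y * (exp (- t) * t ^ Suc k * bessel_J0' (y * t)))"
    by (simp add: fun_eq_iff algebra_simps)
  then show ?thesis
    using integral_exp_neg_power_Suc_by_parts[OF DERIV_bessel_J0_scaled abs_bessel_J0_le_1]
      set_integrable_mult_right[OF absolutely_integrable_J0'_moment, of y "Suc k" y]
    by (simp add: J0_moment_def J0'_moment_def)
qed

lemma J0'_moment_Suc:
  "J0'_moment (Suc k) y = of_nat k * J0'_moment k y - y * J0_moment (Suc k) y"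
proof -
  \<comment> \<open>Bessel's equation removes J0'' from the integrand produced by integration by parts.\<close>
  have ODE: "exp (- t) * t ^ Suc k * (y * bessel_J0'' (y * t))
      = - y * (exp (- t) * t ^ Suc k * bessel_J0 (y * t)) - exp (- t) * t ^ k * bessel_J0' (y * t)" for t
  proof -
    have "exp (- t) * t ^ Suc k * (y * bessel_J0'' (y * t)) = exp (- t) * t ^ k * ((y * t) * bessel_J0'' (y * t))"
      by (simp add: algebra_simps)
    also have "(y * t) * bessel_J0'' (y * t) = - (y * t) * bessel_J0 (y * t) - bessel_J0' (y * t)"
      using bessel_J0_ODE[of "y * t"] by linarith
    finally show ?thesis by (simp add: algebra_simps)
  qed
  have "(\<lambda>t. - y * (exp (- t) * t ^ Suc k * bessel_J0 (y * t)) - exp (- t) * t ^ k * bessel_J0' (y * t))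
      absolutely_integrable_on {0..}"
    by (intro set_integral_diff set_integrable_mult_right absolutely_integrable_J0_moment absolutely_integrable_J0'_moment)
  from integral_exp_neg_power_Suc_by_parts[OF DERIV_bessel_J0'_scaled[of y] abs_bessel_J0'_le_1, of k,
      unfolded ODE, OF this]
  have "J0'_moment (Suc k) y = of_nat (Suc k) * J0'_moment k y + (- y * J0_moment (Suc k) y - J0'_moment k y)"
    unfolding J0_moment_def J0'_moment_def
    by (simp only: integral_diff integral_mult_right integrable_on_mult_right integrable_J0_moment integrable_J0'_moment)
  then show ?thesis by (simp add: algebra_simps)
qed

lemma DERIV_J0_moment_0: "((\<lambda>y. J0_moment 0 y) has_real_derivative J0'_moment 1 y) (at y)"
proof (rule DERIV_of_quadratic_remainder_bound[where C = 2])
  fix z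
  let ?g = "\<lambda>t. exp (- t) * t ^ 0 * bessel_J0 (z * t) - exp (- t) * t ^ 0 * bessel_J0 (y * t)
                - (z - y) * (exp (- t) * t ^ 1 * bessel_J0' (y * t))"
  have remainder: "J0_moment 0 z - J0_moment 0 y - (z - y) * J0'_moment 1 y = integral {0..} ?g"
    unfolding J0_moment_def J0'_moment_def
    by (simp only: integral_diff integral_mult_right integrable_diff integrable_on_mult_right
        integrable_J0_moment integrable_J0'_moment)
  have "norm (integral {0..} ?g) \<le> integral {0..} (\<lambda>t. (z - y)\<^sup>2 * (exp (- t) * t ^ 2))"
  proof (rule integral_norm_bound_integral)
    show "?g integrable_on {0..}"
      by (intro integrable_diff integrable_on_mult_right integrable_J0_moment integrable_J0'_moment)
    show "(\<lambda>t. (z - y)\<^sup>2 * (exp (- t) * t ^ 2)) integrable_on {0..}"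
      using has_integral_exp_neg_power by (intro integrable_on_mult_right) blast
    fix t :: real
    have "?g t = exp (- t) * (bessel_J0 (z * t) - bessel_J0 (y * t) - (z * t - y * t) * bessel_J0' (y * t))"
      by (simp add: algebra_simps)
    then have "\<bar>?g t\<bar> = exp (- t) * \<bar>bessel_J0 (z * t) - bessel_J0 (y * t) - (z * t - y * t) * bessel_J0' (y * t)\<bar>"
      by (simp add: abs_mult)
    also have "\<dots> \<le> exp (- t) * (z * t - y * t)\<^sup>2"
      by (intro mult_left_mono bessel_J0_Taylor_bound) simp
    also have "\<dots> = (z - y)\<^sup>2 * (exp (- t) * t ^ 2)"
      by (simp add: power2_eq_square algebra_simps)
    finally show "norm (?g t) \<le> (z - y)\<^sup>2 * (exp (- t) * t ^ 2)" by simp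
  qed
  also have "\<dots> = 2 * (z - y)\<^sup>2"
    using integral_unique[OF has_integral_exp_neg_power[of 2]] by (simp add: numeral_2_eq_2)
  finally show "\<bar>J0_moment 0 z - J0_moment 0 y - (z - y) * J0'_moment 1 y\<bar> \<le> 2 * (z - y)\<^sup>2"
    unfolding remainder by simp
qed

lemma J0_moment_1: "(1 + y\<^sup>2) * J0_moment 1 y = J0_moment 0 y"
  and J0'_moment_1: "J0'_moment 1 y = - y * J0_moment 1 y"
  using J0_moment_Suc[of 0 y] J0'_moment_Suc[of 0 y] by (simp_all add: algebra_simps power2_eq_square)

lemma J0_moment_0: "J0_moment 0 y = 1 / sqrt (1 + y\<^sup>2)"
proof -
  have "((\<lambda>y. J0_moment 0 y * sqrt (1 + y\<^sup>2)) has_real_derivative 0) (at x)" for x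
  proof -
    let ?s = "1 + x\<^sup>2"
    have pos: "?s > 0" by (simp add: add_pos_nonneg)
    have "((\<lambda>y. J0_moment 0 y * sqrt (1 + y\<^sup>2)) has_real_derivative
        J0'_moment 1 x * sqrt ?s + J0_moment 0 x * (x / sqrt ?s)) (at x)"
      using pos by (auto intro!: derivative_eq_intros DERIV_J0_moment_0 simp: field_simps)
    moreover have "J0'_moment 1 x * sqrt ?s = - (x * J0_moment 0 x) * (sqrt ?s / ?s)"
      unfolding J0'_moment_1 J0_moment_1[of x, symmetric] using pos by (simp add: field_simps)
    moreover have "sqrt ?s / ?s = 1 / sqrt ?s"
      using pos by (simp add: field_simps)
    ultimately show ?thesis
      by simp
  qed
  then have "J0_moment 0 y * sqrt (1 + y\<^sup>2) = J0_moment 0 0 * sqrt (1 + 0\<^sup>2)"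
    using DERIV_isconst_all by blast
  also have "\<dots> = 1"
    using integral_unique[OF has_integral_exp_neg_power[of 0]] by (simp add: J0_moment_def)
  finally have "J0_moment 0 y * sqrt (1 + y\<^sup>2) = 1" .
  moreover have "sqrt (1 + y\<^sup>2) > 0"
    by (simp add: add_pos_nonneg)
  ultimately show ?thesis
    by (simp add: eq_divide_eq)
qed

lemma J0_moment_recurrence:
  "(1 + y\<^sup>2) * J0_moment (Suc (Suc k)) y
     = (2 * real k + 3) * J0_moment (Suc k) y - (real k + 1)\<^sup>2 * J0_moment k y"
proof -
  have D2: "y * J0'_moment (Suc (Suc k)) y = (real k + 1) * (y * J0'_moment (Suc k) y) - y\<^sup>2 * J0_moment (Suc (Suc k)) y"
    unfolding J0'_moment_Suc[of "Suc k" y] by (simp add: algebra_simps power2_eq_square)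
  have D1: "y * J0'_moment (Suc k) y = J0_moment (Suc k) y - (real k + 1) * J0_moment k y"
    unfolding J0_moment_Suc[of k y] by (simp add: algebra_simps)
  have "(1 + y\<^sup>2) * J0_moment (Suc (Suc k)) y
      = (real k + 2) * J0_moment (Suc k) y + (y * J0'_moment (Suc (Suc k)) y + y\<^sup>2 * J0_moment (Suc (Suc k)) y)"
    unfolding J0_moment_Suc[of "Suc k" y] by (simp add: algebra_simps)
  also have "\<dots> = (real k + 2) * J0_moment (Suc k) y + (real k + 1) * (J0_moment (Suc k) y - (real k + 1) * J0_moment k y)"
    unfolding D2 D1 by simp
  finally show ?thesis
    by (simp add: algebra_simps power2_eq_square)
qed

section \<open>Closed form of the moments\<close>

text \<open>
  The coefficient 1 / ((k - 2j)! (j!)^2) of P_k, written with 1/\<Gamma> so that it vanishes for 2j > k;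
  this makes the recurrences below hold uniformly in j.
\<close>

definition J0_moment_coeff :: "nat \<Rightarrow> nat \<Rightarrow> real" where
  "J0_moment_coeff k j = rGamma (real k - 2 * real j + 1) / (fact j)\<^sup>2"

definition J0_moment_poly :: "nat \<Rightarrow> real \<Rightarrow> real" where
  "J0_moment_poly k w = (\<Sum>j\<le>k. (- w) ^ j * J0_moment_coeff k j)"

lemma J0_moment_coeff_eq:
  assumes "2 * j \<le> k"
  shows "J0_moment_coeff k j = 1 / (fact (k - 2 * j) * (fact j)\<^sup>2)"
proof -
  have "real k - 2 * real j + 1 = 1 + of_nat (k - 2 * j)"
    using assms by (simp add: of_nat_diff)
  moreover have "rGamma (1 + of_nat (k - 2 * j) :: real) = inverse (fact (k - 2 * j))"
    by (simp only: rGamma_inverse_Gamma Gamma_fact)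
  ultimately have "J0_moment_coeff k j = inverse (fact (k - 2 * j)) / (fact j)\<^sup>2"
    unfolding J0_moment_coeff_def by (simp only:)
  then show ?thesis
    by (simp add: inverse_eq_divide)
qed

lemma J0_moment_coeff_eq_0:
  assumes "k < 2 * j"
  shows "J0_moment_coeff k j = 0"
proof -
  have "real k - 2 * real j + 1 = of_int (int k - 2 * int j + 1)"
    by simp
  also have "\<dots> \<in> \<int>\<^sub>\<le>\<^sub>0"
    using assms by (intro nonpos_Ints_of_int) simp
  finally show ?thesis
    by (simp add: J0_moment_coeff_def rGamma_nonpos_Int)
qed

lemma J0_moment_coeff_recurrence:
  "((real k + 2)\<^sup>2 - 4 * (real j)\<^sup>2) * J0_moment_coeff (Suc (Suc k)) j
     = (2 * real k + 3) * J0_moment_coeff (Suc k) j - J0_moment_coeff k j"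
proof -
  define z where "z = real k - 2 * real j + 1"
  define R where "R = rGamma (z + 2) / (fact j)\<^sup>2"
  have r1: "rGamma (z + 1) = (z + 1) * rGamma (z + 2)"
    using rGamma_plus1[of "z + 1"] by (simp add: add.assoc)
  have r0: "rGamma z = z * (z + 1) * rGamma (z + 2)"
    using rGamma_plus1[of z] r1 by (metis mult.assoc)
  have args: "real (Suc (Suc k)) - 2 * real j + 1 = z + 2" "real (Suc k) - 2 * real j + 1 = z + 1"
    by (simp_all add: z_def)
  have coeffs: "J0_moment_coeff (Suc (Suc k)) j = R" "J0_moment_coeff (Suc k) j = (z + 1) * R"
    "J0_moment_coeff k j = z * (z + 1) * R"
    unfolding J0_moment_coeff_def args z_def[symmetric] r0 r1 by (simp_all add: R_def)
  have "(real k + 2)\<^sup>2 - 4 * (real j)\<^sup>2 = (2 * real k + 3) * (z + 1) - z * (z + 1)"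
    by (simp add: z_def algebra_simps power2_eq_square)
  then show ?thesis
    unfolding coeffs by (simp only:) (simp add: algebra_simps)
qed

lemma J0_moment_coeff_shift:
  "(real (Suc j))\<^sup>2 * J0_moment_coeff (Suc (Suc k)) (Suc j) = J0_moment_coeff k j"
proof -
  have "real (Suc (Suc k)) - 2 * real (Suc j) + 1 = real k - 2 * real j + 1"
    by simp
  moreover have "(fact (Suc j) :: real) = real (Suc j) * fact j"
    by simp
  ultimately show ?thesis
    unfolding J0_moment_coeff_def by (simp add: power_mult_distrib)
qed

lemma J0_moment_poly_altdef:
  assumes "k \<le> n"
  shows "J0_moment_poly k w = (\<Sum>j\<le>n. (- w) ^ j * J0_moment_coeff k j)"
  unfolding J0_moment_poly_def
  by (rule sum.mono_neutral_left) (use assms in \<open>auto simp: J0_moment_coeff_eq_0\<close>)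

lemma J0_moment_poly_recurrence:
  "(real k + 2)\<^sup>2 * J0_moment_poly (Suc (Suc k)) w
     = (2 * real k + 3) * J0_moment_poly (Suc k) w - (1 + 4 * w) * J0_moment_poly k w"
proof -
  let ?c = J0_moment_coeff
  have "(\<Sum>j\<le>Suc (Suc k). (- w) ^ j * ((real j)\<^sup>2 * ?c (Suc (Suc k)) j))
      = (\<Sum>j\<le>Suc k. (- w) ^ Suc j * ((real (Suc j))\<^sup>2 * ?c (Suc (Suc k)) (Suc j)))"
    by (simp only: sum.atMost_Suc_shift) simp
  also have "\<dots> = - w * (\<Sum>j\<le>Suc k. (- w) ^ j * ?c k j)"
    by (simp only: J0_moment_coeff_shift sum_distrib_left power_Suc mult.assoc)
  also have "(\<Sum>j\<le>Suc k. (- w) ^ j * ?c k j) = J0_moment_poly k w"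
    by (rule J0_moment_poly_altdef[symmetric]) simp
  finally have shifted: "(\<Sum>j\<le>Suc (Suc k). (- w) ^ j * ((real j)\<^sup>2 * ?c (Suc (Suc k)) j))
      = - w * J0_moment_poly k w" .
  have "(real k + 2)\<^sup>2 * J0_moment_poly (Suc (Suc k)) w
      = (\<Sum>j\<le>Suc (Suc k). (- w) ^ j * (((real k + 2)\<^sup>2 - 4 * (real j)\<^sup>2) * ?c (Suc (Suc k)) j))
        + 4 * (\<Sum>j\<le>Suc (Suc k). (- w) ^ j * ((real j)\<^sup>2 * ?c (Suc (Suc k)) j))"
    unfolding J0_moment_poly_def sum_distrib_left sum.distrib[symmetric]
    by (rule sum.cong) (simp_all add: algebra_simps)
  also have "\<dots> = (2 * real k + 3) * (\<Sum>j\<le>Suc (Suc k). (- w) ^ j * ?c (Suc k) j)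
                  - (\<Sum>j\<le>Suc (Suc k). (- w) ^ j * ?c k j) - 4 * w * J0_moment_poly k w"
    unfolding shifted J0_moment_coeff_recurrence sum_distrib_left sum_subtractf[symmetric]
    by (simp add: algebra_simps)
  also have "(\<Sum>j\<le>Suc (Suc k). (- w) ^ j * ?c (Suc k) j) = J0_moment_poly (Suc k) w"
    by (rule J0_moment_poly_altdef[symmetric]) simp
  also have "(\<Sum>j\<le>Suc (Suc k). (- w) ^ j * ?c k j) = J0_moment_poly k w"
    by (rule J0_moment_poly_altdef[symmetric]) simp
  also have "(2 * real k + 3) * J0_moment_poly (Suc k) w - J0_moment_poly k w - 4 * w * J0_moment_poly k w
      = (2 * real k + 3) * J0_moment_poly (Suc k) w - (1 + 4 * w) * J0_moment_poly k w"
    by (simp add: algebra_simps)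
  finally show ?thesis .
qed

lemma J0_moment_poly_0: "J0_moment_poly 0 w = 1"
  and J0_moment_poly_1: "J0_moment_poly 1 w = 1"
  by (simp_all add: J0_moment_poly_def J0_moment_coeff_eq J0_moment_coeff_eq_0)

lemma J0_moment_closed_form:
  "J0_moment k y = (fact k)\<^sup>2 / sqrt (1 + y\<^sup>2) ^ (2 * k + 1) * J0_moment_poly k (y\<^sup>2 / 4)"
proof -
  define r where "r = sqrt (1 + y\<^sup>2)"
  define Q where "Q k = (fact k)\<^sup>2 / r ^ (2 * k + 1)" for k
  let ?P = "\<lambda>k. J0_moment_poly k (y\<^sup>2 / 4)"
  have r: "r > 0" "r\<^sup>2 = 1 + y\<^sup>2"
    by (simp_all add: r_def add_pos_nonneg)
  have Q_Suc: "r\<^sup>2 * Q (Suc k) = (real k + 1)\<^sup>2 * Q k" for k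
    using r(1) by (simp add: Q_def power2_eq_square field_simps)
  have "J0_moment k y = Q k * ?P k \<and> J0_moment (Suc k) y = Q (Suc k) * ?P (Suc k)"
  proof (induction k)
    case 0
    have M0: "r * J0_moment 0 y = 1"
      using J0_moment_0[of y] r(1) by (simp add: r_def)
    have "J0_moment 1 y * r ^ 3 = r * (r\<^sup>2 * J0_moment 1 y)"
      by (simp add: power2_eq_square power3_eq_cube)
    also have "\<dots> = 1"
      using J0_moment_1[of y] M0 r(2) by simp
    finally have "J0_moment 1 y * r ^ 3 = 1" .
    with M0 r(1) show ?case
      by (simp add: Q_def J0_moment_poly_0 J0_moment_poly_1 field_simps flip: One_nat_def)
  next
    case (Suc k)
    have "r\<^sup>2 * J0_moment (Suc (Suc k)) y
        = (2 * real k + 3) * (Q (Suc k) * ?P (Suc k)) - (real k + 1)\<^sup>2 * Q k * ?P k"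
      using J0_moment_recurrence[of y k] Suc.IH r(2) by simp
    also have "\<dots> = Q (Suc k) * ((2 * real k + 3) * ?P (Suc k) - r\<^sup>2 * ?P k)"
      using Q_Suc[of k] by (simp add: algebra_simps)
    also have "\<dots> = Q (Suc k) * ((real k + 2)\<^sup>2 * ?P (Suc (Suc k)))"
      using J0_moment_poly_recurrence[of k "y\<^sup>2 / 4"] r(2) by simp
    also have "\<dots> = r\<^sup>2 * (Q (Suc (Suc k)) * ?P (Suc (Suc k)))"
      using Q_Suc[of "Suc k"] by (simp add: algebra_simps)
    finally show ?case
      using Suc.IH r(1) by simp
  qed
  then show ?thesis
    by (simp add: Q_def r_def)
qed

lemma J0_moment_poly_odd:
  "J0_moment_poly (2 * m + 1) w = (\<Sum>j\<le>m. (- w) ^ j / (fact (2 * m + 1 - 2 * j) * (fact j)\<^sup>2))"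
proof -
  have "J0_moment_poly (2 * m + 1) w = (\<Sum>j\<le>m. (- w) ^ j * J0_moment_coeff (2 * m + 1) j)"
    unfolding J0_moment_poly_def
    by (rule sum.mono_neutral_right) (auto simp: J0_moment_coeff_eq_0)
  then show ?thesis
    by (simp add: J0_moment_coeff_eq)
qed

section \<open>Term-by-term integration\<close>

lemma kelvin_bei_sums:
  "(\<lambda>m. (-1) ^ m * ((x / 2)\<^sup>2) ^ (2 * m + 1) / (fact (2 * m + 1))\<^sup>2) sums kelvin_bei x"
proof -
  let ?u = "(x / 2)\<^sup>2"
  have bound: "norm ((-1) ^ m * ?u ^ (2 * m + 1) / (fact (2 * m + 1))\<^sup>2) \<le> ?u ^ (2 * m + 1) / fact (2 * m + 1)"
    for m
  proof -
    have "(fact (2 * m + 1) :: real) \<le> (fact (2 * m + 1))\<^sup>2"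
      using mult_left_mono[OF fact_ge_1, of "fact (2 * m + 1) :: real" "2 * m + 1"]
      by (simp add: power2_eq_square del: fact_Suc)
    then show ?thesis
      by (simp add: abs_mult divide_left_mono del: power_Suc)
  qed
  have "summable (\<lambda>m. (-1) ^ m * ?u ^ (2 * m + 1) / (fact (2 * m + 1))\<^sup>2)"
    by (rule summable_comparison_test'[OF sums_summable[OF sinh_paired[of ?u]]]) (rule bound)
  moreover have "(x / 2) ^ (4 * m + 2) = ?u ^ (2 * m + 1)" for m
  proof -
    have "4 * m + 2 = 2 * (2 * m + 1)" by simp
    then show ?thesis by (simp only: power_mult)
  qed
  ultimately show ?thesis
    unfolding kelvin_bei_def by (simp add: summable_sums)
qed

lemma bei_J0_integrand_sums:
  assumes "t \<ge> 0"
  shows "(\<lambda>m. (-1) ^ m * (a\<^sup>2 / 4 * (1 + y\<^sup>2)) ^ (2 * m + 1) / (fact (2 * m + 1))\<^sup>2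
              * (exp (- t) * t ^ (2 * m + 1) * bessel_J0 (y * t)))
         sums (exp (- t) * kelvin_bei (a * sqrt ((1 + y\<^sup>2) * t)) * bessel_J0 (y * t))"
proof -
  have "0 \<le> (1 + y\<^sup>2) * t"
    using assms by simp
  then have "(a * sqrt ((1 + y\<^sup>2) * t) / 2)\<^sup>2 = a\<^sup>2 / 4 * (1 + y\<^sup>2) * t"
    by (simp add: power_mult_distrib power_divide)
  from kelvin_bei_sums[of "a * sqrt ((1 + y\<^sup>2) * t)", unfolded this]
  have "(\<lambda>m. (-1) ^ m * (a\<^sup>2 / 4 * (1 + y\<^sup>2) * t) ^ (2 * m + 1) / (fact (2 * m + 1))\<^sup>2
                 * (exp (- t) * bessel_J0 (y * t)))
      sums (kelvin_bei (a * sqrt ((1 + y\<^sup>2) * t)) * (exp (- t) * bessel_J0 (y * t)))"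
    by (rule sums_mult2)
  moreover have "(\<lambda>m. (-1) ^ m * (a\<^sup>2 / 4 * (1 + y\<^sup>2) * t) ^ (2 * m + 1) / (fact (2 * m + 1))\<^sup>2
                 * (exp (- t) * bessel_J0 (y * t)))
      = (\<lambda>m. (-1) ^ m * (a\<^sup>2 / 4 * (1 + y\<^sup>2)) ^ (2 * m + 1) / (fact (2 * m + 1))\<^sup>2
              * (exp (- t) * t ^ (2 * m + 1) * bessel_J0 (y * t)))"
  proof
    fix m
    have "(-1) ^ m * (X * T) / F * (E * J) = (-1) ^ m * X / F * (E * T * J)" for X T F E J :: real
      by (simp add: algebra_simps)
    then show "(-1) ^ m * (a\<^sup>2 / 4 * (1 + y\<^sup>2) * t) ^ (2 * m + 1) / (fact (2 * m + 1))\<^sup>2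
                 * (exp (- t) * bessel_J0 (y * t))
        = (-1) ^ m * (a\<^sup>2 / 4 * (1 + y\<^sup>2)) ^ (2 * m + 1) / (fact (2 * m + 1))\<^sup>2
              * (exp (- t) * t ^ (2 * m + 1) * bessel_J0 (y * t))"
      by (simp only: power_mult_distrib[of "a\<^sup>2 / 4 * (1 + y\<^sup>2)" t])
  qed
  moreover have "kelvin_bei (a * sqrt ((1 + y\<^sup>2) * t)) * (exp (- t) * bessel_J0 (y * t))
      = exp (- t) * kelvin_bei (a * sqrt ((1 + y\<^sup>2) * t)) * bessel_J0 (y * t)"
    by (simp only: mult_ac)
  ultimately show ?thesis
    by (simp only:)
qed

lemma J0_moment_odd:
  "J0_moment (2 * m + 1) y
     = (fact (2 * m + 1))\<^sup>2 / ((1 + y\<^sup>2) ^ (2 * m + 1) * sqrt (1 + y\<^sup>2)) * J0_moment_poly (2 * m + 1) (y\<^sup>2 / 4)"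
proof -
  have "sqrt (1 + y\<^sup>2) ^ (2 * (2 * m + 1) + 1) = (sqrt (1 + y\<^sup>2) ^ 2) ^ (2 * m + 1) * sqrt (1 + y\<^sup>2)"
    by (simp only: power_add power_mult power_one_right)
  then have "sqrt (1 + y\<^sup>2) ^ (2 * (2 * m + 1) + 1) = (1 + y\<^sup>2) ^ (2 * m + 1) * sqrt (1 + y\<^sup>2)"
    by simp
  then show ?thesis
    by (simp only: J0_moment_closed_form)
qed

lemma has_integral_bei_J0_term:
  "((\<lambda>t. (-1) ^ m * (a\<^sup>2 / 4 * (1 + y\<^sup>2)) ^ (2 * m + 1) / (fact (2 * m + 1))\<^sup>2
          * (exp (- t) * t ^ (2 * m + 1) * bessel_J0 (y * t)))
     has_integral (-1) ^ m * (a\<^sup>2 / 4) ^ (2 * m + 1) * J0_moment_poly (2 * m + 1) (y\<^sup>2 / 4) / sqrt (1 + y\<^sup>2))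
    {0..}"
proof -
  have cancel: "(-1) ^ m * (c * s) ^ k / F * (F / (s ^ k * r) * P) = (-1) ^ m * c ^ k * P / r"
    if "F \<noteq> 0" "s \<noteq> 0" for c s F r P :: real and k :: nat
    using that by (simp add: power_mult_distrib field_simps)
  have "(-1) ^ m * (a\<^sup>2 / 4 * (1 + y\<^sup>2)) ^ (2 * m + 1) / (fact (2 * m + 1))\<^sup>2 * J0_moment (2 * m + 1) y
      = (-1) ^ m * (a\<^sup>2 / 4) ^ (2 * m + 1) * J0_moment_poly (2 * m + 1) (y\<^sup>2 / 4) / sqrt (1 + y\<^sup>2)"
    unfolding J0_moment_odd by (rule cancel) (use add_pos_nonneg[of 1 "y\<^sup>2"] in simp_all)
  moreover have "((\<lambda>t. (-1) ^ m * (a\<^sup>2 / 4 * (1 + y\<^sup>2)) ^ (2 * m + 1) / (fact (2 * m + 1))\<^sup>2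
                      * (exp (- t) * t ^ (2 * m + 1) * bessel_J0 (y * t)))
      has_integral (-1) ^ m * (a\<^sup>2 / 4 * (1 + y\<^sup>2)) ^ (2 * m + 1) / (fact (2 * m + 1))\<^sup>2
                   * J0_moment (2 * m + 1) y) {0..}"
    unfolding J0_moment_def
    by (rule has_integral_mult_right[OF integrable_integral[OF integrable_J0_moment]])
  ultimately show ?thesis
    by simp
qed

lemma abs_bei_J0_term_le:
  assumes "t \<ge> 0"
  shows "\<bar>(-1) ^ m * C ^ (2 * m + 1) / (fact (2 * m + 1))\<^sup>2 * (exp (- t) * t ^ (2 * m + 1) * bessel_J0 (y * t))\<bar>
           \<le> exp (- (1 / 2) * t) * ((2 * \<bar>C\<bar>) ^ (2 * m + 1) / fact (2 * m + 1))"
proof -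
  have "\<bar>(-1) ^ m * C ^ (2 * m + 1) / (fact (2 * m + 1))\<^sup>2 * (exp (- t) * t ^ (2 * m + 1) * bessel_J0 (y * t))\<bar>
      = (\<bar>C\<bar> * t) ^ (2 * m + 1) / (fact (2 * m + 1))\<^sup>2 * exp (- t) * \<bar>bessel_J0 (y * t)\<bar>"
    using assms by (simp add: abs_mult power_abs power_mult_distrib)
  also have "\<dots> \<le> exp (t / 2) * ((2 * \<bar>C\<bar>) ^ (2 * m + 1) / fact (2 * m + 1)) * exp (- t) * 1"
    using assms by (intro mult_mono power_div_fact_sq_le_exp abs_bessel_J0_le_1) auto
  also have "\<dots> = exp (- (1 / 2) * t) * ((2 * \<bar>C\<bar>) ^ (2 * m + 1) / fact (2 * m + 1))"
    by (simp add: mult_ac exp_add[symmetric])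
  finally show ?thesis .
qed

lemma has_integral_bei_J0:
  "((\<lambda>t. exp (- t) * kelvin_bei (a * sqrt ((1 + y\<^sup>2) * t)) * bessel_J0 (y * t)) has_integral
      (\<Sum>m. (-1) ^ m * (a\<^sup>2 / 4) ^ (2 * m + 1) * J0_moment_poly (2 * m + 1) (y\<^sup>2 / 4) / sqrt (1 + y\<^sup>2)))
    {0..}"
proof (rule has_integral_suminf_dominated[OF has_integral_bei_J0_term _ _ _ _
      abs_bei_J0_term_le[OF atLeast_iff[THEN iffD1]] bei_J0_integrand_sums[OF atLeast_iff[THEN iffD1]]])
  show "(\<lambda>t::real. exp (- (1 / 2) * t)) integrable_on {0..}"
    by (rule integrable_on_exp_minus_to_infinity) simp
  show "summable (\<lambda>m. (2 * \<bar>a\<^sup>2 / 4 * (1 + y\<^sup>2)\<bar>) ^ (2 * m + 1) / fact (2 * m + 1))"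
    by (rule sums_summable[OF sinh_paired])
qed simp_all

lemma bessel_I0_altdef: "bessel_I0 x = (\<Sum>j. ((x / 2)\<^sup>2) ^ j / (fact j)\<^sup>2)"
  unfolding bessel_I0_def by (simp add: power_mult)

lemma sin_bessel_Cauchy_term:
  fixes c w :: real
  assumes "j \<le> m"
  shows "(-1) ^ (m - j) / fact (2 * (m - j) + 1) * c ^ (2 * (m - j) + 1) * ((c\<^sup>2 * w) ^ j / (fact j)\<^sup>2)
           = (-1) ^ m * c ^ (2 * m + 1) * ((- w) ^ j / (fact (2 * m + 1 - 2 * j) * (fact j)\<^sup>2))"
proof -
  obtain d where m: "m = j + d"
    using assms le_Suc_ex by blast
  have "(-1 :: real) ^ j * (-1) ^ j = 1"
    by (simp flip: power_add)
  moreover have "2 * m + 1 - 2 * j = 2 * d + 1" "m - j = d"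
    by (simp_all add: m)
  moreover have "(c\<^sup>2) ^ j = (c ^ j)\<^sup>2"
    by (simp flip: power_mult add: mult.commute)
  ultimately show ?thesis
    unfolding m by (simp add: power_add power_mult power_minus[of w] power_mult_distrib field_simps)
qed

lemma sin_mult_bessel_series_sums:
  fixes c w :: real
  shows "(\<lambda>m. (-1) ^ m * c ^ (2 * m + 1) * J0_moment_poly (2 * m + 1) w)
           sums (sin c * (\<Sum>j. (c\<^sup>2 * w) ^ j / (fact j)\<^sup>2))"
proof -
  define A where "A i = (-1) ^ i / fact (2 * i + 1) * c ^ (2 * i + 1)" for i
  define B where "B j = (c\<^sup>2 * w) ^ j / (fact j)\<^sup>2" for j
  have "summable (\<lambda>i. norm (A i))"
    using sums_summable[OF sinh_paired[of "\<bar>c\<bar>"]] by (simp add: A_def abs_mult power_abs)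
  moreover have "summable (\<lambda>j. norm (B j))"
    using summable_abs_power_div_fact_sq[of "c\<^sup>2 * w"] by (simp add: B_def abs_mult power_abs)
  ultimately have "(\<lambda>m. \<Sum>i\<le>m. A i * B (m - i)) sums (suminf A * suminf B)"
    by (rule Cauchy_product_sums)
  moreover have "suminf A = sin c"
    using sin_paired[of c] unfolding A_def[abs_def] by (rule sums_unique[symmetric])
  moreover have "(\<Sum>i\<le>m. A i * B (m - i)) = (-1) ^ m * c ^ (2 * m + 1) * J0_moment_poly (2 * m + 1) w" for m
  proof -
    have "A (m - j) * B j = (-1) ^ m * c ^ (2 * m + 1) * ((- w) ^ j / (fact (2 * m + 1 - 2 * j) * (fact j)\<^sup>2))"
      if "j \<le> m" for j
      unfolding A_def B_def using that by (rule sin_bessel_Cauchy_term)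
    then have "(\<Sum>i\<le>m. A i * B (m - i))
        = (\<Sum>j\<le>m. (-1) ^ m * c ^ (2 * m + 1) * ((- w) ^ j / (fact (2 * m + 1 - 2 * j) * (fact j)\<^sup>2)))"
      by (subst sum.atLeastAtMost_rev[of _ 0 m, simplified atLeast0AtMost]) simp
    also have "\<dots> = (-1) ^ m * c ^ (2 * m + 1) * J0_moment_poly (2 * m + 1) w"
      by (simp only: J0_moment_poly_odd sum_distrib_left)
    finally show ?thesis .
  qed
  ultimately show ?thesis
    by (simp add: B_def[abs_def])
qed

theorem mainTheorem6:
  fixes a y :: real
  shows "((\<lambda>t. exp (- t) * kelvin_bei (a * sqrt ((1 + y^2) * t)) * bessel_J0 (y * t))
           has_integral
          (1 / sqrt (1 + y^2) * bessel_I0 (a^2 * y / 4) * sin (a^2 / 4))) {0..}"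
proof -
  have "(a\<^sup>2 / 4)\<^sup>2 * (y\<^sup>2 / 4) = (a\<^sup>2 * y / 4 / 2)\<^sup>2"
    by (simp add: power_mult_distrib power_divide)
  then have "(\<lambda>m. (-1) ^ m * (a\<^sup>2 / 4) ^ (2 * m + 1) * J0_moment_poly (2 * m + 1) (y\<^sup>2 / 4))
      sums (sin (a\<^sup>2 / 4) * bessel_I0 (a\<^sup>2 * y / 4))"
    using sin_mult_bessel_series_sums[of "a\<^sup>2 / 4" "y\<^sup>2 / 4"] by (simp only: bessel_I0_altdef)
  from sums_divide[OF this, of "sqrt (1 + y\<^sup>2)"]
  have "(\<Sum>m. (-1) ^ m * (a\<^sup>2 / 4) ^ (2 * m + 1) * J0_moment_poly (2 * m + 1) (y\<^sup>2 / 4) / sqrt (1 + y\<^sup>2))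
      = 1 / sqrt (1 + y\<^sup>2) * bessel_I0 (a\<^sup>2 * y / 4) * sin (a\<^sup>2 / 4)"
    by (simp add: sums_iff ac_simps)
  with has_integral_bei_J0[of a y] show ?thesis
    by simp
qed

end
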